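(* Let $\lambda \geq 0$ and $0\leq\beta<1$. Let $f(z)=z+\sum_{k=2}^{\infty}a_kz^k$ belong to $\Theta_{\Sigma}(1,\lambda,0,0;\beta)$ (the case $\tau=1$, $\gamma=\delta=0$). Then $$|a_2| \leq \min\left\{\frac{2(1-\beta)}{1+\lambda},\ \sqrt{\frac{2(1-\beta)}{1+2\lambda}}\right\}\quad\text{and}\quad |a_3| \leq \frac{2(1-\beta)}{1+2\lambda}.$$
   Context: Let $\mathbb{U}=\{z\in\mathbb{C}:|z|<1\}$. $\Sigma$ denotes the class of bi-univalent functions: functions $f(z)=z+\sum_{k=2}^\infty a_kz^k$ analytic and univalent in $\mathbb{U}$ whose inverse $f^{-1}$ extends to a univalent function $g$ on $\mathbb{U}$; this $g$ has the expansion $g(w)=w-a_2w^2+(2a_2^2-a_3)w^3-\cdots$. For $\delta\in\mathbb{N}_0$ and $h(z)=z+\sum_{k\ge2}c_kz^k$ analytic in $\mathbb{U}$, the Ruscheweyh derivative is $\mathcal{R}^\delta h(z)=z+\sum_{k=2}^{\infty}\frac{\Gamma(\delta+k)}{\Gamma(k)\Gamma(\delta+1)}c_kz^k$ (for $\delta=0$ it is the identity). For such $h$ and parameters $\lambda,\gamma,\tau\neq0,\delta$, put $$J_h(z)=1+\frac{1}{\tau}\Big[(1-\lambda)(1-\gamma)\frac{\mathcal{R}^\delta h(z)}{z}+(\lambda(\gamma+1)+\gamma)(\mathcal{R}^\delta h)'(z)+\lambda\gamma\big(z(\mathcal{R}^\delta h)''(z)-2\big)-1\Big].$$ For $0\le\beta<1$,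 $\Theta_{\Sigma}(\tau,\lambda,\gamma,\delta;\beta)$ is the set of $f\in\Sigma$ such that $\operatorname{Re}J_f(z)>\beta$ for all $z\in\mathbb{U}$ and $\operatorname{Re}J_g(w)>\beta$ for all $w\in\mathbb{U}$, where $g$ is the extension of $f^{-1}$ to $\mathbb{U}$. *)

theory Defs
  imports "HOL-Analysis.Analysis"
begin

definition coeff0 :: "(complex \<Rightarrow> complex) \<Rightarrow> nat \<Rightarrow> complex" where
  "coeff0 h k = (deriv ^^ k) h 0 / of_nat (fact k)"

definition normalized_univalent :: "(complex \<Rightarrow> complex) \<Rightarrow> bool" where
  "normalized_univalent h \<longleftrightarrow>
     h analytic_on ball 0 1 \<and> h 0 = 0 \<and> deriv h 0 = 1 \<and> inj_on h (ball 0 1)"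

definition inverse_extension :: "(complex \<Rightarrow> complex) \<Rightarrow> (complex \<Rightarrow> complex) \<Rightarrow> bool" where
  "inverse_extension f g \<longleftrightarrow>
     g analytic_on ball 0 1 \<and> inj_on g (ball 0 1) \<and>
     (\<forall>z\<in>ball 0 1. f z \<in> ball 0 1 \<longrightarrow> g (f z) = z)"

definition bi_univalent :: "(complex \<Rightarrow> complex) \<Rightarrow> bool" where
  "bi_univalent f \<longleftrightarrow> normalized_univalent f \<and> (\<exists>g. inverse_extension f g)"

definition ruscheweyh :: "nat \<Rightarrow> (complex \<Rightarrow> complex) \<Rightarrow> complex \<Rightarrow> complex" where
  "ruscheweyh \<delta> h z = z + (\<Sum>k. if 2 \<le> k then
      complex_of_real (Gamma (real (\<delta> + k)) / (Gamma (real k) * Gamma (real \<delta> + 1)))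
        * coeff0 h k * z ^ k else 0)"

text \<open>The quotient p(z)/z with its removable singularity at 0 filled in (p(0)=0).\<close>
definition quot_z :: "(complex \<Rightarrow> complex) \<Rightarrow> complex \<Rightarrow> complex" where
  "quot_z p z = (if z = 0 then deriv p 0 else p z / z)"

definition J_fun :: "complex \<Rightarrow> real \<Rightarrow> real \<Rightarrow> nat \<Rightarrow> (complex \<Rightarrow> complex) \<Rightarrow> complex \<Rightarrow> complex" where
  "J_fun \<tau> lam \<gamma> \<delta> h z =
     1 + (1 / \<tau>) * (of_real ((1 - lam) * (1 - \<gamma>)) * quot_z (ruscheweyh \<delta> h) z
        + of_real (lam * (\<gamma> + 1) + \<gamma>) * deriv (ruscheweyh \<delta> h) z
        + of_real (lam * \<gamma>) * (z * deriv (deriv (ruscheweyh \<delta> h)) z - 2) - 1)"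

definition Theta :: "complex \<Rightarrow> real \<Rightarrow> real \<Rightarrow> nat \<Rightarrow> real \<Rightarrow> (complex \<Rightarrow> complex) set" where
  "Theta \<tau> lam \<gamma> \<delta> \<beta> = {f. normalized_univalent f \<and>
     (\<exists>g. inverse_extension f g \<and>
        (\<forall>z\<in>ball 0 1. Re (J_fun \<tau> lam \<gamma> \<delta> f z) > \<beta>) \<and>
        (\<forall>w\<in>ball 0 1. Re (J_fun \<tau> lam \<gamma> \<delta> g w) > \<beta>))}"

end

theory Submission
  imports Defs "HOL-Complex_Analysis.Complex_Analysis"
begin

(* For tau = 1 and gamma = delta = 0 the Ruscheweyh operator is the identity, so
   J_h(z) = (1 - lambda) h(z)/z + lambda h'(z) = 1 + sum_k (1 + k lambda) c_(k+1) z^k,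
   and (J_h - beta)/(1 - beta) has value 1 at 0 and positive real part. Caratheodory's
   lemma |p_k| <= 2 thus gives (1 + k lambda) |c_(k+1)| <= 2 (1 - beta) for f and for the
   inverse g alike. The third coefficient of g is 2 a_2^2 - a_3, so adding the bounds on
   a_3 and on it bounds |a_2|^2.
   Caratheodory's lemma for p_n: averaging p over rotations by the n-th roots of unity keeps
   p_n and kills p_1, ..., p_(n-1); for the average q, the Cayley transform (q - 1)/(q + 1)
   maps the disc into itself, so by the Cauchy estimates its n-th coefficient q_n/2 has
   modulus at most 1. *)

lemma norm_fps_expansion_nth_le_1:
  fixes f :: "complex \<Rightarrow> complex"
  assumes hol: "f holomorphic_on ball 0 1" and bounded: "\<And>z. norm z < 1 \<Longrightarrow> norm (f z) \<le> 1"
  shows "norm (fps_expansion f 0 $ n) \<le> 1"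
proof (rule tendsto_lowerbound)
  show "((\<lambda>r. 1 / r ^ n) \<longlongrightarrow> 1) (at_left (1::real))"
    by (auto intro!: tendsto_eq_intros)
  have "norm (fps_expansion f 0 $ n) \<le> 1 / r ^ n" if r: "r \<in> {0<..<1}" for r :: real
  proof -
    have "norm ((deriv ^^ n) f 0) \<le> fact n * 1 / r ^ n"
    proof (rule Cauchy_inequality)
      have "cball 0 r \<subseteq> ball (0::complex) 1"
        using r by auto
      then show "continuous_on (cball 0 r) f" "f holomorphic_on ball 0 r"
        by (meson ball_subset_cball hol holomorphic_on_imp_continuous_on holomorphic_on_subset subset_trans)+
      show "norm (f x) \<le> 1" if "norm (0 - x) = r" for x
        using that r by (intro bounded) auto
    qed (use r in auto)
    then show ?thesis
      by (simp add: fps_expansion_def norm_divide field_simps)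
  qed
  then show "\<forall>\<^sub>F r in at_left 1. norm (fps_expansion f 0 $ n) \<le> 1 / r ^ n"
    using eventually_at_left_real[of 0 1] by (auto elim: eventually_mono)
qed simp

lemma norm_diff_one_lt_norm_add_one:
  fixes w :: complex
  assumes "Re w > 0"
  shows "norm (w - 1) < norm (w + 1)"
proof -
  have "(norm (w - 1))\<^sup>2 = (Re w - 1)\<^sup>2 + (Im w)\<^sup>2" "(norm (w + 1))\<^sup>2 = (Re w + 1)\<^sup>2 + (Im w)\<^sup>2"
    by (simp_all add: cmod_power2)
  then have "(norm (w - 1))\<^sup>2 < (norm (w + 1))\<^sup>2"
    using assms by (simp add: power2_eq_square algebra_simps)
  then show ?thesis
    by (rule power_less_imp_less_base) simp
qed

lemma has_fps_expansion_fps_expansion_disc: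
  fixes f :: "complex \<Rightarrow> complex"
  assumes "f holomorphic_on ball 0 1"
  shows "f has_fps_expansion fps_expansion f 0"
  using assms by (intro has_fps_expansion_fps_expansion) auto

lemma fps_expansion_nth_0 [simp]: "fps_expansion f 0 $ 0 = f 0"
  by (simp add: fps_expansion_def)

lemma caratheodory_coeff_bound_gap:
  fixes q :: "complex \<Rightarrow> complex"
  assumes hol: "q holomorphic_on ball 0 1" and q0: "q 0 = 1"
    and re: "\<And>z. z \<in> ball 0 1 \<Longrightarrow> Re (q z) > 0"
    and "n > 0" and gap: "\<And>k. 0 < k \<Longrightarrow> k < n \<Longrightarrow> fps_expansion q 0 $ k = 0"
  shows "norm (fps_expansion q 0 $ n) \<le> 2"
proof -
  define \<omega> where "\<omega> = (\<lambda>z. (q z - 1) / (q z + 1))"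
  define Q W where "Q = fps_expansion q 0" and "W = fps_expansion \<omega> 0"
  have nz: "q z + 1 \<noteq> 0" if "z \<in> ball 0 1" for z
  proof -
    have "Re (q z + 1) > 0"
      using re[OF that] by simp
    then show ?thesis
      by (metis less_irrefl zero_complex.sel(1))
  qed
  have hol\<omega>: "\<omega> holomorphic_on ball 0 1"
    unfolding \<omega>_def using nz by (intro holomorphic_intros hol) auto
  have "norm (\<omega> z) \<le> 1" if "norm z < 1" for z
    using norm_diff_one_lt_norm_add_one[OF re, of z] nz[of z] that
    by (simp add: \<omega>_def norm_divide divide_le_eq_1)
  then have W_n: "norm (W $ n) \<le> 1"
    unfolding W_def by (rule norm_fps_expansion_nth_le_1[OF hol\<omega>])
  have "(\<lambda>z. \<omega> z * (q z + 1)) has_fps_expansion W * (Q + 1)"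
    unfolding W_def Q_def
    by (intro fps_expansion_intros has_fps_expansion_fps_expansion_disc hol hol\<omega>)
  moreover have "(\<lambda>z. \<omega> z * (q z + 1)) has_fps_expansion Q - 1"
  proof (rule has_fps_expansion_cong[THEN iffD2])
    have "\<forall>\<^sub>F z in nhds 0. z \<in> ball 0 1"
      by (intro eventually_nhds_in_open) auto
    then show "\<forall>\<^sub>F z in nhds 0. \<omega> z * (q z + 1) = q z - 1"
      by eventually_elim (simp add: \<omega>_def nz)
    show "(\<lambda>z. q z - 1) has_fps_expansion Q - 1"
      unfolding Q_def by (intro fps_expansion_intros has_fps_expansion_fps_expansion_disc hol)
  qed simp
  ultimately have cayley: "W * (Q + 1) = Q - 1"
    by (rule fps_expansion_unique_complex)
  obtain m where n: "n = Suc m"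
    using \<open>n > 0\<close> gr0_implies_Suc by blast
  have "(\<Sum>i=0..m. W $ i * (Q + 1) $ (n - i)) = 0"
  proof (rule sum.neutral, intro ballI)
    fix i assume "i \<in> {0..m}"
    then show "W $ i * (Q + 1) $ (n - i) = 0"
      using gap[of "n - i"] by (cases "i = 0") (auto simp: W_def \<omega>_def q0 Q_def n)
  qed
  then have "(W * (Q + 1)) $ n = 2 * W $ n"
    by (simp add: fps_mult_nth n Q_def q0)
  then have "Q $ n = 2 * W $ n"
    using cayley \<open>n > 0\<close> by simp
  then show ?thesis
    using W_n by (simp add: Q_def norm_mult)
qed

lemma sum_powers_root_unity_eq_0:
  assumes "0 < k" "k < n"
  shows "(\<Sum>j<n. cis (2 * pi / n) ^ (j * k)) = 0"
proof -
  define x where "x = cis (2 * pi / n) ^ k"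
  \<comment> \<open>Complex_Transcendental shadows these two facts of theory Complex by versions stated with exp.\<close>
  have "inj_on (\<lambda>j. cis (2 * pi * real j / real n)) {..<n}"
    using assms by (intro bij_betw_imp_inj_on[OF Complex.bij_betw_roots_unity]) simp
  then have "cis (2 * pi * real k / real n) \<noteq> cis (2 * pi * real 0 / real n)"
    using assms by (metis inj_on_eq_iff lessThan_iff not_less_zero less_trans)
  moreover have "x = cis (2 * pi * real k / real n)"
    unfolding x_def Complex.DeMoivre by (simp add: field_simps)
  ultimately have "x \<noteq> 1"
    by simp
  moreover have "x ^ n = (cis (2 * pi / n) ^ n) ^ k"
    by (simp add: x_def mult.commute flip: power_mult)
  then have "x ^ n = 1"
    using assms by (simp add: Complex.DeMoivre)
  ultimately have "(\<Sum>j<n. x ^ j) = 0"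
    by (simp add: geometric_sum)
  moreover have "cis (2 * pi / n) ^ (j * k) = x ^ j" for j
    by (simp add: x_def mult.commute flip: power_mult)
  ultimately show ?thesis
    by simp
qed

lemma caratheodory_coeff_bound:
  fixes p :: "complex \<Rightarrow> complex"
  assumes hol: "p holomorphic_on ball 0 1" and p0: "p 0 = 1"
    and re: "\<And>z. z \<in> ball 0 1 \<Longrightarrow> Re (p z) > 0"
    and "n > 0"
  shows "norm (fps_expansion p 0 $ n) \<le> 2"
proof -
  define \<zeta> where "\<zeta> = cis (2 * pi / n)"
  define q where "q z = (\<Sum>j<n. p (\<zeta> ^ j * z)) / of_nat n" for z
  define P where "P = fps_expansion p 0"
  define Q where "Q = (\<Sum>j<n. fps_compose P (fps_const (\<zeta> ^ j) * fps_X)) * fps_const (inverse (of_nat n))"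
  have rotate: "\<zeta> ^ j * z \<in> ball 0 1" if "z \<in> ball 0 1" for j z
    using that by (simp add: \<zeta>_def norm_mult norm_power)
  have "(\<lambda>z. p (\<zeta> ^ j * z)) holomorphic_on ball 0 1" for j
    using holomorphic_on_compose_gen[of "\<lambda>z. \<zeta> ^ j * z" "ball 0 1" p "ball 0 1"] hol rotate
    by (auto simp: o_def image_subset_iff intro: holomorphic_intros)
  then have hol_q: "q holomorphic_on ball 0 1"
    unfolding q_def by (intro holomorphic_intros) auto
  have q0: "q 0 = 1"
    using \<open>n > 0\<close> by (simp add: q_def p0)
  have re_q: "Re (q z) > 0" if "z \<in> ball 0 1" for z
  proof -
    have "(\<Sum>j<n. Re (p (\<zeta> ^ j * z))) > 0"
      using \<open>n > 0\<close> re[OF rotate[OF that]] by (intro sum_pos) auto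
    then show ?thesis
      using \<open>n > 0\<close> by (simp add: q_def Re_sum)
  qed
  have "q has_fps_expansion Q"
    unfolding q_def Q_def divide_inverse P_def
    by (intro fps_expansion_intros has_fps_expansion_compose[unfolded o_def]
          has_fps_expansion_fps_expansion_disc hol) simp
  then have Q_eq: "fps_expansion q 0 = Q"
    by (rule fps_expansion_eqI)
  have Q_nth: "Q $ k = (\<Sum>j<n. \<zeta> ^ (j * k)) * P $ k / of_nat n" for k
    by (simp add: Q_def fps_sum_nth power_mult sum_distrib_right divide_inverse)
  have "norm (Q $ n) \<le> 2"
  proof (rule caratheodory_coeff_bound_gap[OF hol_q q0 re_q \<open>n > 0\<close>, unfolded Q_eq])
    show "Q $ k = 0" if "0 < k" "k < n" for k
      using sum_powers_root_unity_eq_0[OF that] by (simp add: Q_nth \<zeta>_def)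
  qed
  moreover have "\<zeta> ^ n = 1"
    using \<open>n > 0\<close> by (simp add: \<zeta>_def Complex.DeMoivre)
  then have "\<zeta> ^ (j * n) = 1" for j
    by (metis mult.commute power_mult power_one)
  then have "Q $ n = P $ n"
    using \<open>n > 0\<close> by (simp add: Q_nth)
  ultimately show ?thesis
    by (simp add: P_def)
qed

lemma fps_left_inverse_nth:
  fixes F G :: "complex fps"
  assumes "fps_compose G F = fps_X" "F $ 0 = 0" "F $ 1 = 1" "G $ 0 = 0"
  shows "G $ 1 = 1" "G $ 2 = - F $ 2" "G $ 3 = 2 * (F $ 2)\<^sup>2 - F $ 3"
proof -
  have F2: "(F^2) $ 2 = 1" "(F^2) $ 3 = 2 * F $ 2"
    using assms(2,3) by (simp_all add: power2_eq_square fps_mult_nth numeral_3_eq_3 numeral_2_eq_2)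
  have F3: "(F^3) $ 3 = 1"
    using assms(2,3) by (simp add: power3_eq_cube fps_mult_nth numeral_3_eq_3 numeral_2_eq_2)
  have "fps_compose G F $ 1 = 1"
    using assms(1) by simp
  then show G1: "G $ 1 = 1"
    using assms(2-4) by (simp add: fps_compose_nth)
  have "fps_compose G F $ 2 = 0"
    using assms(1) by simp
  then have "G $ 1 * F $ 2 + G $ 2 * (F^2) $ 2 = 0"
    using assms(2-4) by (simp add: fps_compose_nth numeral_2_eq_2 del: power_Suc)
  then show G2: "G $ 2 = - F $ 2"
    using G1 F2 by (simp add: eq_neg_iff_add_eq_0 add.commute)
  have "fps_compose G F $ 3 = 0"
    using assms(1) by simp
  then have "G $ 1 * F $ 3 + G $ 2 * (F^2) $ 3 + G $ 3 * (F^3) $ 3 = 0"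
    using assms(2-4) by (simp add: fps_compose_nth numeral_3_eq_3 numeral_2_eq_2 add.assoc del: power_Suc)
  then have "F $ 3 - F $ 2 * (2 * F $ 2) + G $ 3 = 0"
    using G1 G2 F2 F3 by simp
  then show "G $ 3 = 2 * (F $ 2)\<^sup>2 - F $ 3"
    by algebra
qed

lemma fps_expansion_left_inverse:
  fixes f g :: "complex \<Rightarrow> complex"
  assumes hol_f: "f holomorphic_on ball 0 1" and hol_g: "g holomorphic_on ball 0 1" and "f 0 = 0"
    and inverse: "\<forall>z\<in>ball 0 1. f z \<in> ball 0 1 \<longrightarrow> g (f z) = z"
  shows "fps_compose (fps_expansion g 0) (fps_expansion f 0) = fps_X"
proof -
  have "open (f -` ball 0 1 \<inter> ball 0 1)"
    using continuous_on_open_vimage[of "ball 0 1" f] holomorphic_on_imp_continuous_on[OF hol_f]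
    by auto
  then have "\<forall>\<^sub>F z in nhds 0. z \<in> f -` ball 0 1 \<inter> ball 0 1"
    using \<open>f 0 = 0\<close> by (intro eventually_nhds_in_open) auto
  then have "\<forall>\<^sub>F z in nhds 0. z = (g \<circ> f) z"
    by eventually_elim (simp add: inverse)
  moreover have "(g \<circ> f) has_fps_expansion fps_compose (fps_expansion g 0) (fps_expansion f 0)"
    using \<open>f 0 = 0\<close>
    by (intro has_fps_expansion_compose has_fps_expansion_fps_expansion_disc hol_f hol_g) simp
  ultimately have "(\<lambda>z. z) has_fps_expansion fps_compose (fps_expansion g 0) (fps_expansion f 0)"
    by (subst has_fps_expansion_cong) auto
  then show ?thesis
    using has_fps_expansion_fps_X fps_expansion_unique_complex by blast
qed

lemma coeff0_eq_fps_expansion_nth: "coeff0 h k = fps_expansion h 0 $ k"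
  by (simp add: coeff0_def fps_expansion_def)

lemma inverse_extension_coeffs:
  assumes "normalized_univalent f" and "inverse_extension f g"
  shows "g 0 = 0" "deriv g 0 = 1" "coeff0 g 3 = 2 * (coeff0 f 2)\<^sup>2 - coeff0 f 3"
proof -
  have hol_f: "f holomorphic_on ball 0 1" and f0: "f 0 = 0" and "deriv f 0 = 1"
    using assms(1) by (auto simp: normalized_univalent_def intro: analytic_imp_holomorphic)
  have hol_g: "g holomorphic_on ball 0 1"
    and inverse: "\<forall>z\<in>ball 0 1. f z \<in> ball 0 1 \<longrightarrow> g (f z) = z"
    using assms(2) by (auto simp: inverse_extension_def intro: analytic_imp_holomorphic)
  show "g 0 = 0"
    using inverse f0 by (metis centre_in_ball zero_less_one)
  then have "fps_expansion f 0 $ 0 = 0" "fps_expansion f 0 $ 1 = 1" "fps_expansion g 0 $ 0 = 0"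
    using f0 \<open>deriv f 0 = 1\<close> by (simp_all add: fps_expansion_def)
  from fps_left_inverse_nth[OF fps_expansion_left_inverse[OF hol_f hol_g f0 inverse] this]
  show "deriv g 0 = 1" "coeff0 g 3 = 2 * (coeff0 f 2)\<^sup>2 - coeff0 f 3"
    by (simp_all add: coeff0_eq_fps_expansion_nth fps_expansion_def)
qed

lemma ruscheweyh_0_eq:
  fixes h :: "complex \<Rightarrow> complex"
  assumes hol: "h holomorphic_on ball 0 1" and "h 0 = 0" "deriv h 0 = 1" and z: "z \<in> ball 0 1"
  shows "ruscheweyh 0 h z = h z"
proof -
  define a where "a = (\<lambda>n. coeff0 h n * z ^ n)"
  have "a sums h z"
    using holomorphic_power_series[OF hol z] by (simp add: a_def coeff0_def)
  then have "(\<lambda>n. if n \<in> {0, 1} then 0 else a n) sums (h z - z)"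
    by (rule sums_If_finite_set') (simp_all add: a_def coeff0_def assms)
  moreover have "Gamma (real k) \<noteq> 0" if "k > 0" for k
    using that by (metis Gamma_real_pos of_nat_0_less_iff order_less_irrefl)
  then have "(\<lambda>k. if 2 \<le> k then complex_of_real (Gamma (real (0 + k)) / (Gamma (real k) * Gamma (real 0 + 1)))
        * coeff0 h k * z ^ k else 0) = (\<lambda>n. if n \<in> {0, 1} then 0 else a n)"
    by (intro ext) (auto simp: a_def not_le less_2_cases_iff)
  ultimately show ?thesis
    by (simp add: ruscheweyh_def sums_iff)
qed

lemma J_fun_1_0_0_eq:
  fixes h :: "complex \<Rightarrow> complex"
  assumes hol: "h holomorphic_on ball 0 1" and h0: "h 0 = 0" and d0: "deriv h 0 = 1"
    and z: "z \<in> ball 0 1"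
  shows "J_fun 1 lam 0 0 h z = of_real (1 - lam) * quot_z h z + of_real lam * deriv h z"
proof -
  have "\<forall>\<^sub>F v in nhds w. ruscheweyh 0 h v = h v" if "w \<in> ball 0 1" for w
    using eventually_nhds_in_open[OF open_ball that]
    by eventually_elim (rule ruscheweyh_0_eq[OF hol h0 d0])
  then have deriv_eq: "deriv (ruscheweyh 0 h) w = deriv h w" if "w \<in> ball 0 1" for w
    using deriv_cong_ev that by blast
  have "quot_z (ruscheweyh 0 h) z = quot_z h z"
    using deriv_eq[of 0] ruscheweyh_0_eq[OF hol h0 d0 z] by (simp add: quot_z_def)
  then show ?thesis
    using deriv_eq[OF z] by (simp add: J_fun_def)
qed

lemma holomorphic_on_quot_z:
  assumes "h holomorphic_on ball 0 1" "h 0 = 0"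
  shows "quot_z h holomorphic_on ball 0 1"
proof -
  have "quot_z h = (\<lambda>z. if z = 0 then deriv h 0 else (h z - h 0) / (z - 0))"
    using assms(2) by (intro ext) (simp add: quot_z_def)
  then show ?thesis
    using pole_lemma_open[OF assms(1), of 0] by simp
qed

lemma has_fps_expansion_quot_z:
  fixes h :: "complex \<Rightarrow> complex"
  assumes hol: "h holomorphic_on ball 0 1" and "h 0 = 0" "deriv h 0 = 1"
  shows "quot_z h has_fps_expansion fps_shift 1 (fps_expansion h 0)"
proof -
  define H where "H = fps_expansion h 0"
  have "H $ 0 = 0" "H $ 1 = 1"
    using assms by (simp_all add: H_def fps_expansion_def)
  then have "1 \<le> subdegree H"
    by (intro subdegree_geI) auto
  with has_fps_expansion_fps_expansion_disc[OF hol]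
  have "(\<lambda>z. if z = 0 then H $ 1 else h z / z ^ 1) has_fps_expansion fps_shift 1 H"
    by (intro has_fps_expansion_shift) (simp_all add: H_def)
  moreover have "quot_z h = (\<lambda>z. if z = 0 then H $ 1 else h z / z ^ 1)"
    using \<open>H $ 1 = 1\<close> assms by (intro ext) (simp add: quot_z_def)
  ultimately show ?thesis
    by (simp only: H_def)
qed

lemma Re_J_fun_gt_imp_coeff_bound:
  fixes h :: "complex \<Rightarrow> complex" and lam \<beta> :: real
  assumes hol: "h holomorphic_on ball 0 1" and h0: "h 0 = 0" and d0: "deriv h 0 = 1"
    and "\<beta> < 1" and re: "\<forall>z\<in>ball 0 1. Re (J_fun 1 lam 0 0 h z) > \<beta>" and "k > 0"
  shows "(1 + k * lam) * norm (coeff0 h (Suc k)) \<le> 2 * (1 - \<beta>)"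
proof -
  define J where "J z = of_real (1 - lam) * quot_z h z + of_real lam * deriv h z" for z
  define p where "p z = (J z - of_real \<beta>) / of_real (1 - \<beta>)" for z
  define H where "H = fps_expansion h 0"
  have hol_p: "p holomorphic_on ball 0 1"
    unfolding p_def J_def using \<open>\<beta> < 1\<close>
    by (intro holomorphic_intros holomorphic_on_quot_z hol h0 holomorphic_deriv) auto
  have "J 0 = 1"
    by (simp add: J_def quot_z_def d0 flip: of_real_add)
  then have "p 0 = 1"
    using \<open>\<beta> < 1\<close> by (simp add: p_def)
  have re_p: "Re (p z) > 0" if "z \<in> ball 0 1" for z
  proof -
    have "J_fun 1 lam 0 0 h z = J z"
      using J_fun_1_0_0_eq[OF hol h0 d0 that] by (simp add: J_def)
    then have "Re (J z) > \<beta>"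
      using re that by metis
    then show ?thesis
      using \<open>\<beta> < 1\<close> by (simp add: p_def Re_divide_of_real)
  qed
  have "p has_fps_expansion (fps_const (of_real (1 - lam)) * fps_shift 1 H
      + fps_const (of_real lam) * fps_deriv H - fps_const (of_real \<beta>)) * fps_const (inverse (of_real (1 - \<beta>)))"
    unfolding p_def J_def divide_inverse H_def
    by (intro fps_expansion_intros has_fps_expansion_quot_z has_fps_expansion_fps_expansion_disc hol h0 d0)
  then have "fps_expansion p 0 $ k = of_real (1 + k * lam) * H $ Suc k / of_real (1 - \<beta>)"
    using \<open>k > 0\<close> by (simp add: fps_expansion_eqI divide_inverse algebra_simps)
  with caratheodory_coeff_bound[OF hol_p \<open>p 0 = 1\<close> re_p \<open>k > 0\<close>]
  have "\<bar>1 + k * lam\<bar> * norm (H $ Suc k) / \<bar>1 - \<beta>\<bar> \<le> 2"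
    by (simp only: norm_divide norm_mult norm_of_real)
  then have "\<bar>1 + k * lam\<bar> * norm (H $ Suc k) \<le> 2 * (1 - \<beta>)"
    using \<open>\<beta> < 1\<close> by (simp add: divide_le_eq)
  then show ?thesis
    unfolding coeff0_eq_fps_expansion_nth H_def[symmetric]
    by (meson abs_ge_self mult_right_mono norm_ge_zero order_trans)
qed

lemma Theta_1_0_0_coeff_bounds:
  assumes "f \<in> Theta 1 lam 0 0 \<beta>" and "\<beta> < 1"
  obtains g where "coeff0 g 3 = 2 * (coeff0 f 2)\<^sup>2 - coeff0 f 3"
    and "\<And>k. k > 0 \<Longrightarrow> (1 + k * lam) * norm (coeff0 f (Suc k)) \<le> 2 * (1 - \<beta>)"
    and "\<And>k. k > 0 \<Longrightarrow> (1 + k * lam) * norm (coeff0 g (Suc k)) \<le> 2 * (1 - \<beta>)"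
proof -
  from assms(1) obtain g where f: "normalized_univalent f" and g: "inverse_extension f g"
    and re_f: "\<forall>z\<in>ball 0 1. Re (J_fun 1 lam 0 0 f z) > \<beta>"
    and re_g: "\<forall>w\<in>ball 0 1. Re (J_fun 1 lam 0 0 g w) > \<beta>"
    unfolding Theta_def by blast
  have hol_f: "f holomorphic_on ball 0 1" and "f 0 = 0" "deriv f 0 = 1"
    using f by (auto simp: normalized_univalent_def intro: analytic_imp_holomorphic)
  have hol_g: "g holomorphic_on ball 0 1"
    using g by (auto simp: inverse_extension_def intro: analytic_imp_holomorphic)
  note g_coeffs = inverse_extension_coeffs[OF f g]
  show ?thesis
    using Re_J_fun_gt_imp_coeff_bound[OF hol_f \<open>f 0 = 0\<close> \<open>deriv f 0 = 1\<close> \<open>\<beta> < 1\<close> re_f]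
      Re_J_fun_gt_imp_coeff_bound[OF hol_g g_coeffs(1,2) \<open>\<beta> < 1\<close> re_g]
    by (rule that[OF g_coeffs(3)])
qed

theorem corollary8:
  fixes lam \<beta> :: real and f :: "complex \<Rightarrow> complex"
  assumes "lam \<ge> 0" and "0 \<le> \<beta>" and "\<beta> < 1"
    and "f \<in> Theta 1 lam 0 0 \<beta>"
  shows "cmod (coeff0 f 2) \<le> min (2 * (1 - \<beta>) / (1 + lam)) (sqrt (2 * (1 - \<beta>) / (1 + 2 * lam)))
     \<and> cmod (coeff0 f 3) \<le> 2 * (1 - \<beta>) / (1 + 2 * lam)"
proof -
  obtain g where g3: "coeff0 g 3 = 2 * (coeff0 f 2)\<^sup>2 - coeff0 f 3"
    and bound_f: "\<And>k. k > 0 \<Longrightarrow> (1 + k * lam) * norm (coeff0 f (Suc k)) \<le> 2 * (1 - \<beta>)"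
    and bound_g: "\<And>k. k > 0 \<Longrightarrow> (1 + k * lam) * norm (coeff0 g (Suc k)) \<le> 2 * (1 - \<beta>)"
    using Theta_1_0_0_coeff_bounds[OF assms(4,3)] by blast
  have "1 + lam > 0" "1 + 2 * lam > 0"
    using \<open>lam \<ge> 0\<close> by auto
  have a2: "norm (coeff0 f 2) \<le> 2 * (1 - \<beta>) / (1 + lam)"
    using bound_f[of 1] \<open>1 + lam > 0\<close> by (simp add: numeral_2_eq_2 field_simps)
  have a3: "norm (coeff0 f 3) \<le> 2 * (1 - \<beta>) / (1 + 2 * lam)"
    using bound_f[of 2] \<open>1 + 2 * lam > 0\<close> by (simp add: numeral_3_eq_3 field_simps)
  have b3: "norm (coeff0 g 3) \<le> 2 * (1 - \<beta>) / (1 + 2 * lam)"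
    using bound_g[of 2] \<open>1 + 2 * lam > 0\<close> by (simp add: numeral_3_eq_3 field_simps)
  have "2 * (norm (coeff0 f 2))\<^sup>2 = norm (coeff0 g 3 + coeff0 f 3)"
    by (simp add: g3 norm_mult norm_power)
  also have "\<dots> \<le> 2 * (2 * (1 - \<beta>) / (1 + 2 * lam))"
    using norm_triangle_ineq[of "coeff0 g 3" "coeff0 f 3"] a3 b3 by linarith
  finally have "norm (coeff0 f 2) \<le> sqrt (2 * (1 - \<beta>) / (1 + 2 * lam))"
    by (intro real_le_rsqrt) linarith
  with a2 a3 show ?thesis
    by simp
qed

end
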